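(* Let $q\ge3$ be an integer and $\beta>0$ with $2\pi^2-\beta\pi^2+\beta q^2\sin^2(\frac{\pi}{q})\ne0$. Put $$c_1=\frac{4\beta\pi\sin^2(\frac{\pi}{q})}{2\pi^2-\beta\pi^2+\beta q^2\sin^2(\frac{\pi}{q})},\qquad c_2=\frac{2\beta q\sin^2(\frac{\pi}{q})}{2\pi^2-\beta\pi^2+\beta q^2\sin^2(\frac{\pi}{q})},$$ and let $\tilde M$ be the $q\times q$ matrix with entries ($i,j\in\{1,\dots,q\}$, index differences mod $q$) $$\tilde M(i,j)=\frac{q}{2\pi}\Big(\delta_{j=i-1}-\delta_{j=i}+c_1\sin\big(\tfrac{2\pi}{q}(i-j)\big)+c_2\big[\cos\big(\tfrac{2\pi}{q}(i-j)\big)-\cos\big(\tfrac{2\pi}{q}(i-j-1)\big)\big]\Big).$$ Then the eigenvalues of $\tilde M$ are $\lambda_1=\frac{q}{2\pi}\Big(\big(c_2\tfrac q2-1\big)\big(1-\cos\tfrac{2\pi}{q}\big)+i\big[\big(c_2\tfrac q2-1\big)\sin\tfrac{2\pi}{q}-c_1\tfrac q2\big]\Big)$, $\lambda_{q-1}=\overline{\lambda_1}$, $\lambda_j=\frac{q}{2\pi}\Big(\big[\cos\tfrac{2\pi j}{q}-1\big]-i\sin\tfrac{2\pi j}{q}\Big)$ for $j\in\{2,\dots,q-2\}$, and $\lambda_q=0$. *)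

theory Defs
  imports Complex_Main "Jordan_Normal_Form.Char_Poly"
begin

definition denom :: "nat \<Rightarrow> real \<Rightarrow> real" where
  "denom q \<beta> = 2*pi^2 - \<beta>*pi^2 + \<beta>*(real q)^2*(sin (pi / real q))^2"

definition c1 :: "nat \<Rightarrow> real \<Rightarrow> real" where
  "c1 q \<beta> = 4*\<beta>*pi*(sin (pi / real q))^2 / denom q \<beta>"

definition c2 :: "nat \<Rightarrow> real \<Rightarrow> real" where
  "c2 q \<beta> = 2*\<beta>*real q*(sin (pi / real q))^2 / denom q \<beta>"

definition Mentry :: "nat \<Rightarrow> real \<Rightarrow> int \<Rightarrow> int \<Rightarrow> real" where
  "Mentry q \<beta> i j = real q / (2*pi) *
     ((if (i - j) mod int q = 1 then 1 else 0) - (if (i - j) mod int q = 0 then 1 else 0)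
      + c1 q \<beta> * sin (2*pi / real q * real_of_int (i - j))
      + c2 q \<beta> * (cos (2*pi / real q * real_of_int (i - j))
                   - cos (2*pi / real q * real_of_int (i - j - 1))))"

text \<open>The q x q matrix (0-based row/column k corresponds to paper index k+1).\<close>
definition Mtilde :: "nat \<Rightarrow> real \<Rightarrow> complex mat" where
  "Mtilde q \<beta> = mat q q (\<lambda>(i,j). complex_of_real (Mentry q \<beta> (int i + 1) (int j + 1)))"

definition lam :: "nat \<Rightarrow> real \<Rightarrow> nat \<Rightarrow> complex" where
  "lam q \<beta> j =
    (let l1 = complex_of_real (real q / (2*pi)) *
          Complex ((c2 q \<beta> * real q / 2 - 1) * (1 - cos (2*pi / real q)))
                  ((c2 q \<beta> * real q / 2 - 1) * sin (2*pi / real q) - c1 q \<beta> * real q / 2)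
     in if j = 1 then l1
        else if j = q - 1 then cnj l1
        else if j = q then 0
        else complex_of_real (real q / (2*pi)) *
          Complex (cos (2*pi*real j / real q) - 1) (- sin (2*pi*real j / real q)))"

end

theory Submission
  imports Defs
begin

(* The matrix is circulant, so the discrete Fourier matrix diagonalises it and its eigenvalues
   are the discrete Fourier coefficients of its first column. Each sine and cosine entry is a
   sum of two q-th roots of unity; by orthogonality of characters these contribute only at the
   frequencies k = 1 and k = q - 1, while the two Kronecker deltas give omega^(-k) - 1 at every
   frequency k. *)

definition unity_root :: "nat \<Rightarrow> int \<Rightarrow> complex" where
  "unity_root q n = cis (2 * pi * of_int n / real q)"

lemma unity_root_add: "unity_root q (a + b) = unity_root q a * unity_root q b"
  unfolding unity_root_def cis_mult by (simp add: add_divide_distrib distrib_left)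

lemma unity_root_0 [simp]: "unity_root q 0 = 1"
  by (simp add: unity_root_def)

lemma unity_root_cnj: "cnj (unity_root q n) = unity_root q (- n)"
  by (simp add: unity_root_def cis_cnj)

lemma unity_root_pow: "unity_root q n ^ j = unity_root q (int j * n)"
  unfolding unity_root_def DeMoivre by (simp add: field_simps)

lemma unity_root_eq_1_iff:
  assumes "q > 0"
  shows "unity_root q n = 1 \<longleftrightarrow> int q dvd n"
proof
  assume "unity_root q n = 1"
  hence "cos (2 * pi * of_int n / real q) = 1"
    unfolding unity_root_def by (metis cis.sel(1) one_complex.sel(1))
  then obtain m :: int where "2 * pi * of_int n / real q = of_int m * 2 * pi"
    using cos_one_2pi_int by blast
  hence "of_int n = of_int m * real q"
    using assms by (simp add: field_simps)
  hence "n = m * int q"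
    by (metis of_int_eq_iff of_int_mult of_int_of_nat_eq)
  thus "int q dvd n" by simp
next
  assume "int q dvd n"
  then obtain m where "n = int q * m" ..
  thus "unity_root q n = 1"
    using assms cis_multiple_2pi[of "of_int m"] by (simp add: unity_root_def mult.assoc)
qed

lemma unity_root_cong:
  assumes "q > 0" and "a mod int q = b mod int q"
  shows "unity_root q a = unity_root q b"
proof -
  have "unity_root q (a - b) = 1"
    using assms by (simp add: unity_root_eq_1_iff mod_eq_dvd_iff)
  thus ?thesis
    using unity_root_add[of q "a - b" b] by simp
qed

lemma sum_unity_root_powers:
  assumes "q > 0"
  shows "(\<Sum>j<q. unity_root q (int j * n)) = (if int q dvd n then of_nat q else 0)"
proof (cases "int q dvd n")
  case True
  hence "unity_root q (int j * n) = 1" for j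
    using assms by (simp add: unity_root_eq_1_iff)
  thus ?thesis using True by simp
next
  case False
  hence "unity_root q n \<noteq> 1" and "unity_root q n ^ q = 1"
    using assms by (simp_all add: unity_root_eq_1_iff unity_root_pow)
  hence "(\<Sum>j<q. unity_root q n ^ j) = 0"
    by (simp add: geometric_sum)
  thus ?thesis using False by (simp add: unity_root_pow)
qed

lemma cos_unity_root:
  "complex_of_real (cos (2 * pi / real q * of_int n)) = (unity_root q n + unity_root q (- n)) / 2"
  unfolding unity_root_def by (simp add: complex_eq_iff)

lemma sin_unity_root:
  "complex_of_real (sin (2 * pi / real q * of_int n)) = (unity_root q n - unity_root q (- n)) / (2 * \<i>)"
  unfolding unity_root_def by (simp add: complex_eq_iff)

lemma unity_root_Complex:
  "unity_root q n = Complex (cos (2 * pi * of_int n / real q)) (sin (2 * pi * of_int n / real q))"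
  by (simp add: unity_root_def complex_eq_iff)

text \<open>Column \<open>j\<close> of \<open>dft_mat q\<close> is the character of frequency \<open>j + 1\<close>, so that the eigenvalues
  come out indexed by \<open>1..q\<close> as in the statement.\<close>

definition dft_mat :: "nat \<Rightarrow> complex mat" where
  "dft_mat q = mat q q (\<lambda>(i, j). unity_root q (int i * (int j + 1)))"

definition idft_mat :: "nat \<Rightarrow> complex mat" where
  "idft_mat q = mat q q (\<lambda>(i, j). unity_root q (- (int i + 1) * int j) / of_nat q)"

lemma dft_mat_carrier [simp]: "dft_mat q \<in> carrier_mat q q"
  and idft_mat_carrier [simp]: "idft_mat q \<in> carrier_mat q q"
  by (simp_all add: dft_mat_def idft_mat_def)

lemma dft_mat_mult_idft_mat:
  assumes "q > 0"
  shows "dft_mat q * idft_mat q = 1\<^sub>m q"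
proof (rule eq_matI)
  fix i l assume "i < dim_row (1\<^sub>m q)" "l < dim_col (1\<^sub>m q)"
  hence il: "i < q" "l < q" by simp_all
  have "int q dvd (int i - int l) \<longleftrightarrow> i = l"
    using il by (simp add: mod_eq_dvd_iff [symmetric])
  moreover have "unity_root q (int i * (int j + 1)) * unity_root q (- (int j + 1) * int l)
      = unity_root q (int i - int l) * unity_root q (int j * (int i - int l))" for j
    by (simp flip: unity_root_add add: algebra_simps)
  ultimately show "(dft_mat q * idft_mat q) $$ (i, l) = 1\<^sub>m q $$ (i, l)"
    using il assms
    by (simp add: dft_mat_def idft_mat_def scalar_prod_def atLeast0LessThan sum_unity_root_powers
        flip: sum_divide_distrib sum_distrib_left)
qed (simp_all add: dft_mat_def idft_mat_def)

lemma char_poly_eq_prod_eigenvalues: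
  fixes A :: "'a :: field mat"
  assumes A: "A \<in> carrier_mat n n" and V: "V \<in> carrier_mat n n" and W: "W \<in> carrier_mat n n"
    and VW: "V * W = 1\<^sub>m n" and AV: "A * V = V * mat_diag n d"
  shows "char_poly A = (\<Prod>i<n. [:- d i, 1:])"
proof -
  have "A = (A * V) * W"
    using A V W VW by (simp add: assoc_mult_mat)
  hence "similar_mat_wit A (mat_diag n d) V W"
    using A V W VW mat_mult_left_right_inverse[OF V W VW]
    unfolding similar_mat_wit_def AV by auto
  hence "char_poly A = char_poly (mat_diag n d)"
    by (intro char_poly_similar) (auto simp: similar_mat_def)
  also have "\<dots> = (\<Prod>a\<leftarrow>map d [0..<n]. [:- a, 1:])"
  proof -
    have "diag_mat (mat_diag n d) = map d [0..<n]"
      by (auto simp: diag_mat_def mat_diag_def intro!: map_cong)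
    thus ?thesis
      using char_poly_upper_triangular[OF mat_diag_dim, of n d]
      by (simp add: upper_triangular_def mat_diag_def)
  qed
  also have "\<dots> = (\<Prod>i<n. [:- d i, 1:])"
    by (simp add: prod.distinct_set_conv_list [symmetric] atLeast0LessThan o_def)
  finally show ?thesis .
qed

definition circulant_mat :: "nat \<Rightarrow> (int \<Rightarrow> complex) \<Rightarrow> complex mat" where
  "circulant_mat q f = mat q q (\<lambda>(i, j). f ((int i - int j) mod int q))"

definition dft :: "nat \<Rightarrow> (int \<Rightarrow> complex) \<Rightarrow> nat \<Rightarrow> complex" where
  "dft q f k = (\<Sum>m<q. f (int m) * unity_root q (- int m * int k))"

lemma sum_mod_diff_reindex:
  assumes "q > 0"
  shows "(\<Sum>j<q. h ((a - int j) mod int q)) = (\<Sum>m<q. h (int m))"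
  \<comment> \<open>\<open>j \<mapsto> (a - j) mod q\<close> is an involution of \<open>{..<q}\<close>\<close>
  by (rule sum.reindex_bij_witness[where i = "\<lambda>m. nat ((a - int m) mod int q)"
        and j = "\<lambda>j. nat ((a - int j) mod int q)"])
    (use assms in \<open>auto simp: mod_diff_right_eq nat_less_iff\<close>)

lemma circulant_mat_mult_dft_mat:
  assumes "q > 0"
  shows "circulant_mat q f * dft_mat q = dft_mat q * mat_diag q (\<lambda>j. dft q f (j + 1))"
proof (rule eq_matI)
  fix i l assume "i < dim_row (dft_mat q * mat_diag q (\<lambda>j. dft q f (j + 1)))"
    and "l < dim_col (dft_mat q * mat_diag q (\<lambda>j. dft q f (j + 1)))"
  hence il: "i < q" "l < q" by (simp_all add: dft_mat_def mat_diag_def)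
  define k where "k = int l + 1"
  have shift: "unity_root q (int j * k)
      = unity_root q (int i * k) * unity_root q (- ((int i - int j) mod int q) * k)" for j
  proof -
    have "(- ((int i - int j) mod int q) * k) mod int q = (- (int i - int j) * k) mod int q"
      by (metis mod_minus_eq mod_mult_left_eq)
    hence "unity_root q (- ((int i - int j) mod int q) * k) = unity_root q (- (int i - int j) * k)"
      by (rule unity_root_cong[OF assms])
    thus ?thesis
      by (simp flip: unity_root_add add: algebra_simps)
  qed
  have "(circulant_mat q f * dft_mat q) $$ (i, l)
      = (\<Sum>j<q. f ((int i - int j) mod int q) * unity_root q (int j * k))"
    using il by (simp add: circulant_mat_def dft_mat_def k_def scalar_prod_def atLeast0LessThan)
  also have "\<dots> = unity_root q (int i * k)
      * (\<Sum>j<q. f ((int i - int j) mod int q) * unity_root q (- ((int i - int j) mod int q) * k))"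
    unfolding sum_distrib_left
  proof (rule sum.cong[OF refl])
    fix j
    show "f ((int i - int j) mod int q) * unity_root q (int j * k) = unity_root q (int i * k)
        * (f ((int i - int j) mod int q) * unity_root q (- ((int i - int j) mod int q) * k))"
      unfolding shift[of j] by (simp add: ac_simps)
  qed
  also have "\<dots> = unity_root q (int i * k) * dft q f (l + 1)"
  proof -
    have "int (l + 1) = k" by (simp add: k_def)
    thus ?thesis
      using sum_mod_diff_reindex[OF assms, of "\<lambda>m. f m * unity_root q (- m * k)" "int i"]
      unfolding dft_def by simp
  qed
  also have "\<dots> = (dft_mat q * mat_diag q (\<lambda>j. dft q f (j + 1))) $$ (i, l)"
    using il by (simp add: mat_diag_mult_right[of _ q] dft_mat_def k_def)
  finally show "(circulant_mat q f * dft_mat q) $$ (i, l)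
      = (dft_mat q * mat_diag q (\<lambda>j. dft q f (j + 1))) $$ (i, l)" .
qed (simp_all add: circulant_mat_def dft_mat_def mat_diag_def)

lemma char_poly_circulant_mat:
  assumes "q > 0"
  shows "char_poly (circulant_mat q f) = (\<Prod>k = 1..q. [:- dft q f k, 1:])"
proof -
  have "char_poly (circulant_mat q f) = (\<Prod>j<q. [:- dft q f (j + 1), 1:])"
    using assms dft_mat_mult_idft_mat circulant_mat_mult_dft_mat
    by (intro char_poly_eq_prod_eigenvalues[of _ q "dft_mat q" "idft_mat q"])
      (simp_all add: circulant_mat_def)
  thus ?thesis
    by (simp add: prod.atLeast1_atMost_eq)
qed

lemma Mentry_diff: "Mentry q \<beta> i j = Mentry q \<beta> (i - j) 0"
  by (simp add: Mentry_def)

lemma Mentry_unity_root: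
  "complex_of_real (Mentry q \<beta> n 0) = complex_of_real (real q / (2 * pi)) *
     ((if n mod int q = 1 then 1 else 0) - (if n mod int q = 0 then 1 else 0)
      + complex_of_real (c1 q \<beta>) * ((unity_root q n - unity_root q (- n)) / (2 * \<i>))
      + complex_of_real (c2 q \<beta>) * ((unity_root q n + unity_root q (- n)) / 2
          - (unity_root q (n - 1) + unity_root q (1 - n)) / 2))"
  unfolding Mentry_def diff_zero of_real_mult of_real_add of_real_diff cos_unity_root sin_unity_root
  by simp

lemma Mentry_mod:
  assumes "q > 0"
  shows "Mentry q \<beta> (n mod int q) 0 = Mentry q \<beta> n 0"
proof -
  have "unity_root q (n mod int q) = unity_root q n"
    and "unity_root q (- (n mod int q)) = unity_root q (- n)"
    and "unity_root q (n mod int q - 1) = unity_root q (n - 1)"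
    and "unity_root q (1 - n mod int q) = unity_root q (1 - n)"
    by (rule unity_root_cong[OF assms], simp add: mod_minus_eq mod_diff_left_eq mod_diff_right_eq)+
  hence "complex_of_real (Mentry q \<beta> (n mod int q) 0) = complex_of_real (Mentry q \<beta> n 0)"
    unfolding Mentry_unity_root by simp
  thus ?thesis by (simp only: of_real_eq_iff)
qed

lemma Mtilde_eq_circulant_mat:
  assumes "q > 0"
  shows "Mtilde q \<beta> = circulant_mat q (\<lambda>n. complex_of_real (Mentry q \<beta> n 0))"
proof -
  have "Mentry q \<beta> (int i + 1) (int j + 1) = Mentry q \<beta> ((int i - int j) mod int q) 0" for i j
    by (simp add: Mentry_mod[OF assms] Mentry_diff[of q \<beta> "int i + 1"])
  thus ?thesis
    unfolding Mtilde_def circulant_mat_def by simp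
qed

lemma Mentry_mult_unity_root:
  assumes "m < q"
  shows "complex_of_real (Mentry q \<beta> (int m) 0) * unity_root q (- int m * int k)
    = complex_of_real (real q / (2 * pi)) *
      ((if m = 1 then unity_root q (- int k) else 0) - (if m = 0 then 1 else 0)
       + complex_of_real (c1 q \<beta>) / (2 * \<i>)
         * (unity_root q (int m * (1 - int k)) - unity_root q (int m * (- 1 - int k)))
       + complex_of_real (c2 q \<beta>) / 2
         * ((1 - unity_root q (- 1)) * unity_root q (int m * (1 - int k))
           + (1 - unity_root q 1) * unity_root q (int m * (- 1 - int k))))"
proof -
  let ?E = "unity_root q (- int m * int k)"
  have distrib: "K * (x - y + u * ((a - b) / (2 * \<i>)) + v * ((a + b) / 2 - (c + d) / 2)) * E
      = K * (x * E - y * E + u / (2 * \<i>) * (a * E - b * E) + v / 2 * (a * E + b * E - c * E - d * E))"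
    for K x y u v a b c d E :: complex
    by (simp add: field_simps)
  have prods: "unity_root q (int m) * ?E = unity_root q (int m * (1 - int k))"
    "unity_root q (- int m) * ?E = unity_root q (int m * (- 1 - int k))"
    "unity_root q (int m - 1) * ?E = unity_root q (- 1) * unity_root q (int m * (1 - int k))"
    "unity_root q (1 - int m) * ?E = unity_root q 1 * unity_root q (int m * (- 1 - int k))"
    by (simp_all flip: unity_root_add add: algebra_simps)
  have "int m mod int q = int m"
    using assms by simp
  thus ?thesis
    unfolding Mentry_unity_root distrib prods by (auto simp: algebra_simps)
qed

lemma dft_Mentry:
  assumes "q \<ge> 2"
  shows "dft q (\<lambda>n. complex_of_real (Mentry q \<beta> n 0)) k = complex_of_real (real q / (2 * pi)) *
    (unity_root q (- int k) - 1
     + complex_of_real (c1 q \<beta>) / (2 * \<i>) * ((\<Sum>m<q. unity_root q (int m * (1 - int k)))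
         - (\<Sum>m<q. unity_root q (int m * (- 1 - int k))))
     + complex_of_real (c2 q \<beta>) / 2 * ((1 - unity_root q (- 1)) * (\<Sum>m<q. unity_root q (int m * (1 - int k)))
         + (1 - unity_root q 1) * (\<Sum>m<q. unity_root q (int m * (- 1 - int k)))))"
proof -
  let ?K = "complex_of_real (real q / (2 * pi))"
  let ?C1 = "complex_of_real (c1 q \<beta>) / (2 * \<i>)"
  let ?C2 = "complex_of_real (c2 q \<beta>) / 2"
  have "dft q (\<lambda>n. complex_of_real (Mentry q \<beta> n 0)) k
      = (\<Sum>m<q. ?K * ((if m = 1 then unity_root q (- int k) else 0) - (if m = 0 then 1 else 0)
        + ?C1 * (unity_root q (int m * (1 - int k)) - unity_root q (int m * (- 1 - int k)))
        + ?C2 * ((1 - unity_root q (- 1)) * unity_root q (int m * (1 - int k))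
            + (1 - unity_root q 1) * unity_root q (int m * (- 1 - int k)))))"
    unfolding dft_def by (rule sum.cong[OF refl], rule Mentry_mult_unity_root) simp
  also have "\<dots> = ?K * ((\<Sum>m<q. if m = 1 then unity_root q (- int k) else 0)
        - (\<Sum>m<q. if m = 0 then 1 else 0)
        + ?C1 * ((\<Sum>m<q. unity_root q (int m * (1 - int k))) - (\<Sum>m<q. unity_root q (int m * (- 1 - int k))))
        + ?C2 * ((1 - unity_root q (- 1)) * (\<Sum>m<q. unity_root q (int m * (1 - int k)))
            + (1 - unity_root q 1) * (\<Sum>m<q. unity_root q (int m * (- 1 - int k)))))"
    by (simp only: sum.distrib sum_subtractf flip: sum_distrib_left)
  finally show ?thesis
    using assms by simp
qed

lemma not_dvd_of_abs_less:
  fixes x :: int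
  assumes "x \<noteq> 0" and "\<bar>x\<bar> < m"
  shows "\<not> m dvd x"
  using zdvd_not_zless[of "\<bar>x\<bar>" m] assms by simp

lemma dft_real_conj:
  assumes "q > 0" and "k \<le> q"
  shows "dft q (\<lambda>n. complex_of_real (g n)) (q - k) = cnj (dft q (\<lambda>n. complex_of_real (g n)) k)"
proof -
  have "unity_root q (- int m * int (q - k)) = cnj (unity_root q (- int m * int k))" for m
  proof -
    have "- int m * int (q - k) = int m * int k + (- int m) * int q"
      using assms by (simp add: of_nat_diff algebra_simps)
    hence "(- int m * int (q - k)) mod int q = (int m * int k) mod int q"
      by (simp only: mod_mult_self1)
    hence "unity_root q (- int m * int (q - k)) = unity_root q (int m * int k)"
      by (rule unity_root_cong[OF assms(1)])
    thus ?thesis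
      by (simp add: unity_root_cnj)
  qed
  thus ?thesis
    unfolding dft_def by (simp add: cnj_sum)
qed

lemma dft_Mentry_1:
  assumes "q \<ge> 3"
  shows "dft q (\<lambda>n. complex_of_real (Mentry q \<beta> n 0)) 1 = lam q \<beta> 1"
proof -
  have "q > 0" and "q \<ge> 2"
    using assms by simp_all
  moreover have "\<not> int q dvd - 2"
    using assms by (intro not_dvd_of_abs_less) auto
  ultimately show ?thesis
    using assms unfolding dft_Mentry[OF \<open>q \<ge> 2\<close>] sum_unity_root_powers[of q, OF \<open>q > 0\<close>]
    by (simp add: lam_def unity_root_Complex complex_eq_iff algebra_simps flip: divide_divide_eq_left;
        simp add: field_simps)
qed

lemma dft_Mentry_other:
  assumes "q \<ge> 2" and "\<not> int q dvd 1 - int k" and "\<not> int q dvd - 1 - int k"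
  shows "dft q (\<lambda>n. complex_of_real (Mentry q \<beta> n 0)) k
    = complex_of_real (real q / (2 * pi)) * (unity_root q (- int k) - 1)"
  using assms by (simp add: dft_Mentry sum_unity_root_powers)

lemma dft_Mentry_eq_lam:
  assumes q: "q \<ge> 3" and k: "1 \<le> k" "k \<le> q"
  shows "dft q (\<lambda>n. complex_of_real (Mentry q \<beta> n 0)) k = lam q \<beta> k"
proof -
  consider "k = 1" | "k = q - 1" | "k = q" | "2 \<le> k" "k \<le> q - 2"
    using k by linarith
  then show ?thesis
  proof cases
    case 1
    thus ?thesis
      using dft_Mentry_1[OF q] by simp
  next
    case 2
    have "q - 1 \<noteq> 1"
      using q by simp
    hence "lam q \<beta> (q - 1) = cnj (lam q \<beta> 1)"
      by (simp add: lam_def Let_def)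
    moreover have "dft q (\<lambda>n. complex_of_real (Mentry q \<beta> n 0)) (q - 1)
        = cnj (dft q (\<lambda>n. complex_of_real (Mentry q \<beta> n 0)) 1)"
      using q by (intro dft_real_conj) simp_all
    ultimately show ?thesis
      using 2 dft_Mentry_1[OF q] by simp
  next
    case 3
    have "\<not> int q dvd - 1 - int q"
      using not_dvd_of_abs_less[of "- 1" "int q"] q dvd_add_right_iff[of "int q" "int q" "- 1 - int q"]
      by simp
    moreover have "\<not> int q dvd 1 - int q"
      using q by (intro not_dvd_of_abs_less) auto
    moreover have "unity_root q (- int q) = 1"
      using q by (simp add: unity_root_eq_1_iff)
    ultimately show ?thesis
      using q 3 by (simp add: dft_Mentry_other lam_def)
  next
    case 4
    have "\<not> int q dvd 1 - int k" and "\<not> int q dvd - 1 - int k"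
      using q 4 by (intro not_dvd_of_abs_less; auto)+
    moreover have "k \<noteq> 1" "k \<noteq> q - 1" "k \<noteq> q"
      using q 4 by arith+
    ultimately show ?thesis
      using q by (simp add: dft_Mentry_other lam_def unity_root_Complex complex_eq_iff)
  qed
qed

theorem lemma3p2:
  fixes q :: nat and \<beta> :: real
  assumes "q \<ge> 3" and "\<beta> > 0"
    and "2*pi^2 - \<beta>*pi^2 + \<beta>*(real q)^2*(sin (pi / real q))^2 \<noteq> 0"
  shows "char_poly (Mtilde q \<beta>) = (\<Prod>j = 1..q. [:- lam q \<beta> j, 1:])"
proof -
  have q: "q > 0"
    using assms(1) by simp
  have "char_poly (Mtilde q \<beta>)
      = (\<Prod>k = 1..q. [:- dft q (\<lambda>n. complex_of_real (Mentry q \<beta> n 0)) k, 1:])"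
    unfolding Mtilde_eq_circulant_mat[OF q] by (rule char_poly_circulant_mat[OF q])
  also have "\<dots> = (\<Prod>j = 1..q. [:- lam q \<beta> j, 1:])"
    using assms(1) by (intro prod.cong) (simp_all add: dft_Mentry_eq_lam)
  finally show ?thesis .
qed

end
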